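(* Let $\widehat D=(Q,\widehat\Sigma,q_0,\delta,F)$ be as in the context and let $\mathcal A=(Q,\Sigma,q_0,\delta_0,\delta_1,F)$ be defined as follows: for $q\in Q$, $\sigma\in\Sigma$, $c\in\{0,1\}$, if $\delta(q,\sigma^c)=q'$ is defined, then $\delta_c(q,\sigma)=(q',\mathit{act}|_\sigma)$, where $\mathit{act}\in\Sigma_{\mathsf{Act}}$ is any letter with $\mathit{act}[0]=c$, $\delta(q,\mathit{act})$ defined and $\mathit{act}|_\sigma\neq\bot$; otherwise $\delta_c(q,\sigma)$ is undefined. Then such an $\mathit{act}$ always exists, the value $\mathit{act}|_\sigma$ does not depend on the choice of $\mathit{act}$ (so $\delta_0,\delta_1$ are well defined, with $\delta_0$ using only counter updates in $\{0,+1\}$), and $\mathcal A$ is a (partial) deterministic real-time one-counter automaton consistent with the sample: for every $w\in\mathrm{pref}(\mathcal S)$ the run of $\mathcal A$ on $w$ exists and its counter-effect equals $\mathsf{ce}(w)$, every word of $\mathcal S^+$ is accepted by $\mathcal A$, and every word of $\mathcal S^-$ is rejected by $\mathcal A$.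
   Context: Let $\Sigma=\{\sigma_1,\dots,\sigma_k\}$ be a finite alphabet. A sample set is a pair of finite sets of words $\mathcal S^+,\mathcal S^-\subseteq\Sigma^*$ with $\mathcal S^+\cap\mathcal S^-=\emptyset$; write $\mathcal S=\mathcal S^+\cup\mathcal S^-$ and $\mathrm{pref}(\mathcal S)$ for the set of all prefixes (including $\varepsilon$ and the words themselves) of words of $\mathcal S$. We are given $\mathsf{ce}:\mathrm{pref}(\mathcal S)\to\mathbb N$ with $\mathsf{ce}(\varepsilon)=0$ and $\mathsf{ce}(w\sigma)-\mathsf{ce}(w)\in\{-1,0,+1\}$ whenever $w\sigma\in\mathrm{pref}(\mathcal S)$, $\sigma\in\Sigma$. For $d\in\mathbb N$, $\mathrm{sgn}(d)=0$ if $d=0$ and $1$ otherwise. For $w\in\mathrm{pref}(\mathcal S)$ define $\mathsf{Act}(w)\in\{0,1\}\times\{0,+1,-1,\bot\}^k$ by $\mathsf{Act}(w)[0]=\mathrm{sgn}(\mathsf{ce}(w))$ and, for $i\in[1,k]$, $\mathsf{Act}(w)[i]=\mathsf{ce}(w\sigma_i)-\mathsf{ce}(w)$ if $w\sigma_i\in\mathrm{pref}(\mathcal S)$, and $\mathsf{Act}(w)[i]=\bot$ otherwise. For a tuple $\mathit{act}$ of this shape, $\mathit{act}|_{\sigma_i}$ denotes $\mathit{act}[i]$. Two such tuples $x,y$ are similar, $x\sim y$, if either $x[0]\neq y[0]$, or for all $i\in[1,k]$: $x[i]=\bot$ or $y[i]=\bot$ or $x[i]=y[i]$; otherwise $x\not\sim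 y$. Let $\widetilde\Sigma=\{\sigma^0,\sigma^1:\sigma\in\Sigma\}$ (fresh letters). For $w\in\mathrm{pref}(\mathcal S)$, $\mathsf{Enc}(\varepsilon)=\varepsilon$ and $\mathsf{Enc}(w)$ is the word over $\widetilde\Sigma$ of the same length with $\mathsf{Enc}(w)[0]=w[0]^0$ and $\mathsf{Enc}(w)[i]=w[i]^{\mathrm{sgn}(\mathsf{ce}(w[0\cdots i-1]))}$ for $i>0$ (positions indexed from $0$). Let $\Sigma_{\mathsf{Act}}=\{\mathsf{Act}(w):w\in\mathrm{pref}(\mathcal S)\}$, viewed as a set of fresh letters, and $\widehat\Sigma=\widetilde\Sigma\cup\Sigma_{\mathsf{Act}}$. The enriched sample over $\widehat\Sigma$ is: $\widehat{\mathcal S}^+=\{\mathsf{Enc}(w):w\in\mathcal S^+\}\cup\{\mathsf{Enc}(w)\cdot\mathsf{Act}(w):w\in\mathrm{pref}(\mathcal S)\}$ and $\widehat{\mathcal S}^-=\{\mathsf{Enc}(w):w\in\mathcal S^-\}\cup\{\mathsf{Enc}(w)\cdot\mathit{op}:w\in\mathrm{pref}(\mathcal S),\ \mathit{op}\in\Sigma_{\mathsf{Act}},\ \mathit{op}\not\sim\mathsf{Act}(w)\}$. $\widehat D=(Q,\widehat\Sigma,q_0,\delta,F)$ is a deterministic finite automaton with possibly partial transition function $\delta$ (a word is accepted iff its run exists and ends in $F$) such that: (i) $\widehat D$ accepts every word of $\widehat{\mathcal S}^+$ and rejects every word of $\widehat{\mathcal S}^-$; (ii) every transition comes from a prefix of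 a positive sample: whenever $\delta(q,x)=q'$ with $x\in\widehat\Sigma$, there is a word $u$ with $ux\in\mathrm{pref}(\widehat{\mathcal S}^+)$ and $\delta(q_0,u)=q$. (These properties hold e.g. for the output of the RPNI algorithm.) A deterministic real-time one-counter automaton (DROCA) is $\mathcal A=(Q,\Sigma,q_0,\delta_0,\delta_1,F)$ with (here possibly partial) maps $\delta_0:Q\times\Sigma\to Q\times\{0,+1\}$ and $\delta_1:Q\times\Sigma\to Q\times\{0,+1,-1\}$. Configurations are pairs $(p,n)\in Q\times\mathbb N$; there is a step $(p,n)\xrightarrow{a}(q,n+e)$ iff $\delta_{\mathrm{sgn}(n)}(p,a)=(q,e)$. The run on $w$ starts at $(q_0,0)$; if it exists and ends in $(q,m)$, then $m$ is the counter-effect $\mathsf{ce}_{\mathcal A}(w)$ and $w$ is accepted iff $q\in F$; otherwise $w$ is rejected. *)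

theory Defs
  imports Main "HOL-Library.Sublist"
begin

definition sgnn :: "nat \<Rightarrow> nat" where
  "sgnn d = (if d = 0 then 0 else 1)"

definition pref :: "'x list set \<Rightarrow> 'x list set" where
  "pref S = {u. \<exists>w\<in>S. prefix u w}"

(* An Act-letter: component 0 is a nat in {0,1}; components 1..k are indexed by the
   letters of Sig, with None playing the role of bottom. *)
type_synonym 'a act = "nat \<times> ('a \<Rightarrow> int option)"

(* the enriched alphabet: Tl s c is the letter s^c, ActL a is an Act-letter *)
datatype 'a hat = Tl 'a nat | ActL "'a act"

definition Act :: "'a set \<Rightarrow> 'a list set \<Rightarrow> ('a list \<Rightarrow> nat) \<Rightarrow> 'a list \<Rightarrow> 'a act" where
  "Act Sig S ce w =
     (sgnn (ce w),
      (\<lambda>s. if s \<in> Sig \<and> w @ [s] \<in> pref S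
           then Some (int (ce (w @ [s])) - int (ce w)) else None))"

definition similar :: "'a set \<Rightarrow> 'a act \<Rightarrow> 'a act \<Rightarrow> bool" where
  "similar Sig x y \<longleftrightarrow>
     fst x \<noteq> fst y \<or>
     (\<forall>s\<in>Sig. snd x s = None \<or> snd y s = None \<or> snd x s = snd y s)"

definition Enc :: "('a list \<Rightarrow> nat) \<Rightarrow> 'a list \<Rightarrow> 'a hat list" where
  "Enc ce w = map (\<lambda>i. Tl (w ! i) (if i = 0 then 0 else sgnn (ce (take i w)))) [0..<length w]"

definition SigmaAct :: "'a set \<Rightarrow> 'a list set \<Rightarrow> ('a list \<Rightarrow> nat) \<Rightarrow> 'a act set" where
  "SigmaAct Sig S ce = Act Sig S ce ` pref S"

definition hatPos :: "'a set \<Rightarrow> 'a list set \<Rightarrow> 'a list set \<Rightarrow> ('a list \<Rightarrow> nat) \<Rightarrow> 'a hat list set" where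
  "hatPos Sig Sp Sn ce =
     Enc ce ` Sp \<union> {Enc ce w @ [ActL (Act Sig (Sp \<union> Sn) ce w)] | w. w \<in> pref (Sp \<union> Sn)}"

definition hatNeg :: "'a set \<Rightarrow> 'a list set \<Rightarrow> 'a list set \<Rightarrow> ('a list \<Rightarrow> nat) \<Rightarrow> 'a hat list set" where
  "hatNeg Sig Sp Sn ce =
     Enc ce ` Sn \<union> {Enc ce w @ [ActL op] | w op. w \<in> pref (Sp \<union> Sn)
        \<and> op \<in> SigmaAct Sig (Sp \<union> Sn) ce
        \<and> \<not> similar Sig op (Act Sig (Sp \<union> Sn) ce w)}"

definition dfa_run :: "('s \<Rightarrow> 'b \<Rightarrow> 's option) \<Rightarrow> 's \<Rightarrow> 'b list \<Rightarrow> 's option" where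
  "dfa_run \<delta> q w = fold (\<lambda>x r. Option.bind r (\<lambda>p. \<delta> p x)) w (Some q)"

definition dfa_accepts :: "('s \<Rightarrow> 'b \<Rightarrow> 's option) \<Rightarrow> 's \<Rightarrow> 's set \<Rightarrow> 'b list \<Rightarrow> bool" where
  "dfa_accepts \<delta> q0 F w \<longleftrightarrow> (\<exists>q. dfa_run \<delta> q0 w = Some q \<and> q \<in> F)"

definition droca_delta ::
  "('s \<Rightarrow> 'a hat \<Rightarrow> 's option) \<Rightarrow> 'a act set \<Rightarrow> nat \<Rightarrow> 's \<Rightarrow> 'a \<Rightarrow> ('s \<times> int) option" where
  "droca_delta \<delta> SAct c q s =
     (case \<delta> q (Tl s c) of
        None \<Rightarrow> None
      | Some q' \<Rightarrow> Some (q', the (snd (SOME a. a \<in> SAct \<and> fst a = c \<and> \<delta> q (ActL a) \<noteq> None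
                                                \<and> snd a s \<noteq> None) s)))"

definition droca_step :: "(nat \<Rightarrow> 's \<Rightarrow> 'a \<Rightarrow> ('s \<times> int) option) \<Rightarrow> ('s \<times> nat) \<Rightarrow> 'a \<Rightarrow> ('s \<times> nat) option" where
  "droca_step d cfg a =
     (case cfg of (p, n) \<Rightarrow>
       (case d (sgnn n) p a of
          None \<Rightarrow> None
        | Some (q, e) \<Rightarrow> if int n + e \<ge> 0 then Some (q, nat (int n + e)) else None))"

definition droca_run :: "(nat \<Rightarrow> 's \<Rightarrow> 'a \<Rightarrow> ('s \<times> int) option) \<Rightarrow> 's \<Rightarrow> 'a list \<Rightarrow> ('s \<times> nat) option" where
  "droca_run d q0 w = fold (\<lambda>a r. Option.bind r (\<lambda>cfg. droca_step d cfg a)) w (Some (q0, 0))"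

definition droca_accepts :: "(nat \<Rightarrow> 's \<Rightarrow> 'a \<Rightarrow> ('s \<times> int) option) \<Rightarrow> 's \<Rightarrow> 's set \<Rightarrow> 'a list \<Rightarrow> bool" where
  "droca_accepts d q0 F w \<longleftrightarrow> (\<exists>q m. droca_run d q0 w = Some (q, m) \<and> q \<in> F)"

end

theory Submission
  imports Defs
begin

text \<open>Every transition of the DFA is taken along a prefix of a positive enriched sample, so
  a letter \<open>\<sigma>\<^sup>c\<close> read in state \<open>q\<close> comes from the encoding of some \<open>v \<sigma> \<in> pref(S)\<close>
  with \<open>c = sgn(ce v)\<close>, and every enabled Act-letter leads to an accepting state. If an
  enabled Act-letter with first component \<open>sgn(ce v)\<close> prescribed a counter update for \<open>\<sigma>\<close>
  different from \<open>ce(v\<sigma>) - ce(v)\<close>, it would be dissimilar to \<open>Act(v)\<close>, so the DFA would accept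
  a negative sample. Hence the DROCA's update on \<open>\<sigma>\<close> is \<open>ce(v\<sigma>) - ce(v)\<close>, and by induction its
  run on \<open>w \<in> pref(S)\<close> reaches the DFA's state after \<open>Enc(w)\<close> with counter \<open>ce(w)\<close>.\<close>

lemma dfa_run_snoc: "dfa_run \<delta> q (u @ [x]) = Option.bind (dfa_run \<delta> q u) (\<lambda>p. \<delta> p x)"
  by (simp add: dfa_run_def)

lemma dfa_accepts_snocD:
  "dfa_accepts \<delta> q0 F (u @ [x]) \<Longrightarrow> \<exists>q q'. dfa_run \<delta> q0 u = Some q \<and> \<delta> q x = Some q' \<and> q' \<in> F"
  by (cases "dfa_run \<delta> q0 u") (auto simp: dfa_accepts_def dfa_run_snoc)

lemma droca_run_snoc:
  "droca_run d q0 (w @ [a]) = Option.bind (droca_run d q0 w) (\<lambda>cfg. droca_step d cfg a)"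
  by (simp add: droca_run_def)

lemma pref_prefix: "v \<in> pref S \<Longrightarrow> prefix u v \<Longrightarrow> u \<in> pref S"
  by (auto simp: pref_def intro: prefix_order.trans)

lemma pref_snocD: "w @ [s] \<in> pref S \<Longrightarrow> w \<in> pref S"
  by (erule pref_prefix) simp

lemma in_pref: "w \<in> S \<Longrightarrow> w \<in> pref S"
  by (auto simp: pref_def)

lemma set_pref_subset: "w \<in> pref S \<Longrightarrow> \<forall>v\<in>S. set v \<subseteq> A \<Longrightarrow> set w \<subseteq> A"
  by (auto simp: pref_def dest: set_mono_prefix)

lemma length_Enc [simp]: "length (Enc ce w) = length w"
  by (simp add: Enc_def)

lemma nth_Enc:
  "i < length w \<Longrightarrow> Enc ce w ! i = Tl (w ! i) (if i = 0 then 0 else sgnn (ce (take i w)))"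
  by (simp add: Enc_def)

lemma take_Enc: "take n (Enc ce w) = Enc ce (take n w)"
  by (rule nth_equalityI) (auto simp: nth_Enc)

lemma Enc_snoc: "ce [] = 0 \<Longrightarrow> Enc ce (w @ [s]) = Enc ce w @ [Tl s (sgnn (ce w))]"
  by (rule nth_equalityI) (auto simp: nth_Enc nth_append sgnn_def less_Suc_eq)

lemma ActL_notin_Enc: "ActL a \<notin> set (Enc ce w)"
  by (auto simp: Enc_def)

lemma prefix_snoc_Enc:
  assumes "prefix (u @ [x]) (Enc ce w)"
  shows "\<exists>n<length w. u = Enc ce (take n w) \<and> x = Enc ce w ! n"
proof -
  from assms obtain zs where e: "Enc ce w = u @ [x] @ zs"
    by (auto simp: prefix_def)
  have "length (Enc ce w) = length (u @ [x] @ zs)"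
    using e by (rule arg_cong)
  then have "length u < length w"
    by simp
  moreover have "u = Enc ce (take (length u) w)"
    using e by (metis append_eq_conv_conj take_Enc)
  moreover have "x = Enc ce w ! length u"
    using e by simp
  ultimately show ?thesis by blast
qed

lemma Enc_Act_in_hatPos:
  "w \<in> pref (Sp \<union> Sn) \<Longrightarrow> Enc ce w @ [ActL (Act Sig (Sp \<union> Sn) ce w)] \<in> hatPos Sig Sp Sn ce"
  by (auto simp: hatPos_def)

lemma Enc_in_hatPos: "w \<in> Sp \<Longrightarrow> Enc ce w \<in> hatPos Sig Sp Sn ce"
  by (simp add: hatPos_def)

lemma Enc_in_hatNeg: "w \<in> Sn \<Longrightarrow> Enc ce w \<in> hatNeg Sig Sp Sn ce"
  by (simp add: hatNeg_def)

lemma Enc_dissimilar_in_hatNeg: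
  "\<lbrakk>w \<in> pref (Sp \<union> Sn); a \<in> SigmaAct Sig (Sp \<union> Sn) ce;
    \<not> similar Sig a (Act Sig (Sp \<union> Sn) ce w)\<rbrakk>
   \<Longrightarrow> Enc ce w @ [ActL a] \<in> hatNeg Sig Sp Sn ce"
  unfolding hatNeg_def by blast

lemma prefix_hatPos_cases:
  assumes "u \<in> pref (hatPos Sig Sp Sn ce)"
  obtains w where "w \<in> pref (Sp \<union> Sn)" "prefix u (Enc ce w)"
    | w where "w \<in> pref (Sp \<union> Sn)" "u = Enc ce w @ [ActL (Act Sig (Sp \<union> Sn) ce w)]"
proof -
  obtain u' where u': "u' \<in> hatPos Sig Sp Sn ce" "prefix u u'"
    using assms by (auto simp: pref_def)
  show thesis
  proof (cases "u' \<in> Enc ce ` Sp")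
    case True
    then show thesis
      using u'(2) that(1) in_pref by blast
  next
    case False
    then obtain w where w: "w \<in> pref (Sp \<union> Sn)" "u' = Enc ce w @ [ActL (Act Sig (Sp \<union> Sn) ce w)]"
      using u'(1) unfolding hatPos_def by blast
    then consider "prefix u (Enc ce w)" | "u = u'"
      using u'(2) by auto
    then show thesis
      using that w by cases auto
  qed
qed

lemma Tl_prefix_hatPos:
  assumes "ce [] = 0" and "u @ [Tl s c] \<in> pref (hatPos Sig Sp Sn ce)"
  shows "\<exists>v. u = Enc ce v \<and> v @ [s] \<in> pref (Sp \<union> Sn) \<and> c = sgnn (ce v)"
proof -
  obtain w where w: "w \<in> pref (Sp \<union> Sn)" "prefix (u @ [Tl s c]) (Enc ce w)"
    using assms(2) by (cases rule: prefix_hatPos_cases) auto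
  then obtain n where n: "n < length w" "u = Enc ce (take n w)" "Tl s c = Enc ce w ! n"
    using prefix_snoc_Enc by blast
  then have "take n w @ [s] = take (Suc n) w" "c = sgnn (ce (take n w))"
    using assms(1) by (auto simp: nth_Enc take_Suc_conv_app_nth sgnn_def)
  moreover have "take (Suc n) w \<in> pref (Sp \<union> Sn)"
    using w(1) pref_prefix take_is_prefix by metis
  ultimately show ?thesis
    using n(2) by metis
qed

lemma ActL_prefix_hatPos:
  assumes "u @ [ActL a] \<in> pref (hatPos Sig Sp Sn ce)"
  shows "\<exists>v\<in>pref (Sp \<union> Sn). u = Enc ce v \<and> a = Act Sig (Sp \<union> Sn) ce v"
  using assms
proof (cases rule: prefix_hatPos_cases)
  case (1 w)
  then have "ActL a \<in> set (Enc ce w)"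
    using set_mono_prefix by fastforce
  then show ?thesis
    using ActL_notin_Enc by blast
qed auto

locale consistent_dfa =
  fixes Sig :: "'a set" and Sp Sn :: "'a list set" and ce :: "'a list \<Rightarrow> nat"
    and q0 :: 's and \<delta> :: "'s \<Rightarrow> 'a hat \<Rightarrow> 's option" and F :: "'s set"
  assumes ce_eps: "ce [] = 0"
    and S_words: "\<And>w. w \<in> Sp \<union> Sn \<Longrightarrow> set w \<subseteq> Sig"
    and ce_step: "\<And>w s. s \<in> Sig \<Longrightarrow> w @ [s] \<in> pref (Sp \<union> Sn) \<Longrightarrow>
                   int (ce (w @ [s])) - int (ce w) \<in> {-1, 0, 1}"
    and cons_pos: "\<And>u. u \<in> hatPos Sig Sp Sn ce \<Longrightarrow> dfa_accepts \<delta> q0 F u"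
    and cons_neg: "\<And>u. u \<in> hatNeg Sig Sp Sn ce \<Longrightarrow> \<not> dfa_accepts \<delta> q0 F u"
    and from_pos: "\<And>q x q'. \<delta> q x = Some q' \<Longrightarrow>
                     \<exists>u. u @ [x] \<in> pref (hatPos Sig Sp Sn ce) \<and> dfa_run \<delta> q0 u = Some q"
begin

abbreviation S :: "'a list set" where
  "S \<equiv> Sp \<union> Sn"

abbreviation SAct :: "'a act set" where
  "SAct \<equiv> SigmaAct Sig S ce"

lemma Tl_transition_source:
  assumes "\<delta> q (Tl s c) = Some q'"
  obtains v where "dfa_run \<delta> q0 (Enc ce v) = Some q" "v @ [s] \<in> pref S" "c = sgnn (ce v)"
proof -
  obtain u where u: "u @ [Tl s c] \<in> pref (hatPos Sig Sp Sn ce)" "dfa_run \<delta> q0 u = Some q"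
    using from_pos[OF assms] by blast
  show thesis
    using Tl_prefix_hatPos[where ce = ce, OF ce_eps u(1)] u(2) that by blast
qed

lemma Act_transition_defined:
  assumes "dfa_run \<delta> q0 (Enc ce v) = Some q" "v \<in> pref S"
  shows "\<delta> q (ActL (Act Sig S ce v)) \<noteq> None"
  using dfa_accepts_snocD[OF cons_pos[OF Enc_Act_in_hatPos[OF assms(2)]]] assms(1) by auto

lemma Act_transition_accepting:
  assumes "\<delta> q (ActL a) = Some q'"
  shows "q' \<in> F"
proof -
  obtain u where u: "u @ [ActL a] \<in> pref (hatPos Sig Sp Sn ce)" "dfa_run \<delta> q0 u = Some q"
    using from_pos[OF assms] by blast
  then obtain v where "v \<in> pref S" "u = Enc ce v" "a = Act Sig S ce v"
    using ActL_prefix_hatPos by blast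
  then have "dfa_accepts \<delta> q0 F (u @ [ActL a])"
    using cons_pos Enc_Act_in_hatPos by blast
  then show ?thesis
    using u(2) assms by (auto dest: dfa_accepts_snocD)
qed

lemma enabled_Act_update:
  assumes run: "dfa_run \<delta> q0 (Enc ce v) = Some q" and vs: "v @ [s] \<in> pref S" and "s \<in> Sig"
    and a: "a \<in> SAct" "fst a = sgnn (ce v)" "\<delta> q (ActL a) = Some q'" "snd a s \<noteq> None"
  shows "snd a s = Some (int (ce (v @ [s])) - int (ce v))"
proof (rule ccontr)
  assume "snd a s \<noteq> Some (int (ce (v @ [s])) - int (ce v))"
  then have "\<not> similar Sig a (Act Sig S ce v)"
    using vs \<open>s \<in> Sig\<close> a(2,4) by (auto simp: similar_def Act_def)
  then have "\<not> dfa_accepts \<delta> q0 F (Enc ce v @ [ActL a])"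
    using cons_neg Enc_dissimilar_in_hatNeg pref_snocD[OF vs] a(1) by blast
  moreover have "q' \<in> F"
    using Act_transition_accepting[OF a(3)] .
  ultimately show False
    using run a(3) by (simp add: dfa_accepts_def dfa_run_snoc)
qed

lemma Act_letter_enabled:
  assumes "dfa_run \<delta> q0 (Enc ce v) = Some q" "v @ [s] \<in> pref S" "s \<in> Sig"
  shows "Act Sig S ce v \<in> SAct \<and> fst (Act Sig S ce v) = sgnn (ce v)
    \<and> \<delta> q (ActL (Act Sig S ce v)) \<noteq> None \<and> snd (Act Sig S ce v) s \<noteq> None"
  using assms pref_snocD[OF assms(2)] Act_transition_defined
  by (auto simp: SigmaAct_def Act_def)

lemma Tl_transition_enables_Act:
  assumes "\<delta> q (Tl s c) = Some q'" "s \<in> Sig"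
  shows "\<exists>a\<in>SAct. fst a = c \<and> \<delta> q (ActL a) \<noteq> None \<and> snd a s \<noteq> None"
proof -
  obtain v where "dfa_run \<delta> q0 (Enc ce v) = Some q" "v @ [s] \<in> pref S" "c = sgnn (ce v)"
    using assms(1) by (rule Tl_transition_source)
  then show ?thesis
    using Act_letter_enabled assms(2) by blast
qed

lemma enabled_Act_updates_agree:
  assumes "\<delta> q (Tl s c) = Some q'" "s \<in> Sig"
    and "a \<in> SAct" "fst a = c" "\<delta> q (ActL a) \<noteq> None" "snd a s \<noteq> None"
    and "b \<in> SAct" "fst b = c" "\<delta> q (ActL b) \<noteq> None" "snd b s \<noteq> None"
  shows "snd a s = snd b s"
proof -
  obtain v where v: "dfa_run \<delta> q0 (Enc ce v) = Some q" "v @ [s] \<in> pref S" "c = sgnn (ce v)"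
    using assms(1) by (rule Tl_transition_source)
  have "snd a s = Some (int (ce (v @ [s])) - int (ce v))"
    and "snd b s = Some (int (ce (v @ [s])) - int (ce v))"
    using assms v(3) by (auto intro: enabled_Act_update[OF v(1,2)])
  then show ?thesis
    by simp
qed

lemma droca_delta_update:
  assumes "s \<in> Sig" "\<delta> q (Tl s (sgnn (ce v))) = Some q'"
    and "dfa_run \<delta> q0 (Enc ce v) = Some q" "v @ [s] \<in> pref S"
  shows "droca_delta \<delta> SAct (sgnn (ce v)) q s = Some (q', int (ce (v @ [s])) - int (ce v))"
proof -
  let ?P = "\<lambda>a. a \<in> SAct \<and> fst a = sgnn (ce v) \<and> \<delta> q (ActL a) \<noteq> None \<and> snd a s \<noteq> None"
  have "?P (SOME a. ?P a)"
    using Act_letter_enabled[OF assms(3,4,1)] by (rule someI)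
  then have "snd (SOME a. ?P a) s = Some (int (ce (v @ [s])) - int (ce v))"
    using enabled_Act_update[OF assms(3,4,1)] by blast
  then show ?thesis
    using assms(2) by (simp add: droca_delta_def)
qed

lemma droca_delta_source:
  assumes "s \<in> Sig" "droca_delta \<delta> SAct c q s = Some (q', e)"
  obtains v where "v @ [s] \<in> pref S" "c = sgnn (ce v)" "e = int (ce (v @ [s])) - int (ce v)"
proof -
  have "\<delta> q (Tl s c) \<noteq> None"
    using assms(2) by (auto simp: droca_delta_def split: option.splits)
  then obtain q'' where q'': "\<delta> q (Tl s c) = Some q''"
    by blast
  then obtain v where v: "dfa_run \<delta> q0 (Enc ce v) = Some q" "v @ [s] \<in> pref S" "c = sgnn (ce v)"
    by (rule Tl_transition_source)
  have "droca_delta \<delta> SAct c q s = Some (q'', int (ce (v @ [s])) - int (ce v))"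
    using droca_delta_update[OF assms(1) _ v(1,2)] q'' v(3) by blast
  then show thesis
    using that v(2,3) assms(2) by simp
qed

lemma droca_delta_update_range:
  assumes "s \<in> Sig" "droca_delta \<delta> SAct c q s = Some (q', e)"
  shows "e \<in> {-1, 0, 1}"
  using assms
proof (cases rule: droca_delta_source)
  case (1 v)
  then show ?thesis
    using ce_step \<open>s \<in> Sig\<close> by simp
qed

text \<open>In counter state zero the update is \<open>ce(v\<sigma>) - 0 \<ge> 0\<close>, so \<open>\<delta>\<^sub>0\<close> never decrements.\<close>

lemma droca_delta_zero_update_range:
  assumes "s \<in> Sig" "droca_delta \<delta> SAct 0 q s = Some (q', e)"
  shows "e \<in> {0, 1}"
proof -
  have "e \<ge> 0"
    using assms by (cases rule: droca_delta_source) (simp add: sgnn_def split: if_splits)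
  then show ?thesis
    using droca_delta_update_range[OF assms] by auto
qed

lemma run_simulation:
  assumes "w \<in> pref S"
  shows "\<exists>q. dfa_run \<delta> q0 (Enc ce w) = Some q
             \<and> droca_run (droca_delta \<delta> SAct) q0 w = Some (q, ce w)"
  using assms
proof (induction w rule: rev_induct)
  case Nil
  show ?case by (simp add: dfa_run_def droca_run_def Enc_def ce_eps)
next
  case (snoc s w)
  have "w \<in> pref S"
    using snoc.prems by (rule pref_snocD)
  then obtain q where q: "dfa_run \<delta> q0 (Enc ce w) = Some q"
    "droca_run (droca_delta \<delta> SAct) q0 w = Some (q, ce w)"
    using snoc.IH by blast
  have "s \<in> Sig"
    using set_pref_subset[OF snoc.prems] S_words by auto
  obtain q' where q': "\<delta> q (Tl s (sgnn (ce w))) = Some q'"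
    using dfa_accepts_snocD[OF cons_pos[OF Enc_Act_in_hatPos[OF snoc.prems]]] q(1)
    by (auto simp: Enc_snoc[where ce = ce, OF ce_eps] dfa_run_snoc)
  have "droca_delta \<delta> SAct (sgnn (ce w)) q s = Some (q', int (ce (w @ [s])) - int (ce w))"
    using droca_delta_update[OF \<open>s \<in> Sig\<close> q' q(1) snoc.prems] .
  then show ?case
    using q q' by (simp add: Enc_snoc[where ce = ce, OF ce_eps] dfa_run_snoc droca_run_snoc droca_step_def)
qed

lemma droca_accepts_iff_dfa_accepts_Enc:
  assumes "w \<in> pref S"
  shows "droca_accepts (droca_delta \<delta> SAct) q0 F w \<longleftrightarrow> dfa_accepts \<delta> q0 F (Enc ce w)"
  using run_simulation[OF assms] by (auto simp: dfa_accepts_def droca_accepts_def)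

lemma droca_accepts_pos: "w \<in> Sp \<Longrightarrow> droca_accepts (droca_delta \<delta> SAct) q0 F w"
  using droca_accepts_iff_dfa_accepts_Enc in_pref cons_pos Enc_in_hatPos by blast

lemma droca_rejects_neg: "w \<in> Sn \<Longrightarrow> \<not> droca_accepts (droca_delta \<delta> SAct) q0 F w"
  using droca_accepts_iff_dfa_accepts_Enc in_pref cons_neg Enc_in_hatNeg by blast

end

theorem lemma3:
  fixes Sig :: "'a set" and Sp Sn :: "'a list set" and ce :: "'a list \<Rightarrow> nat"
    and Q :: "'s set" and q0 :: 's and \<delta> :: "'s \<Rightarrow> 'a hat \<Rightarrow> 's option" and F :: "'s set"
  defines "S \<equiv> Sp \<union> Sn"
  defines "SAct \<equiv> SigmaAct Sig S ce"
  assumes Sigma_fin: "finite Sig"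
    and S_fin: "finite Sp" "finite Sn"
    and S_words: "\<forall>w\<in>S. set w \<subseteq> Sig"
    and S_disj: "Sp \<inter> Sn = {}"
    and ce_eps: "ce [] = 0"
    and ce_step: "\<forall>w s. s \<in> Sig \<and> w @ [s] \<in> pref S \<longrightarrow>
                     int (ce (w @ [s])) - int (ce w) \<in> {-1, 0, 1}"
    and Q_fin: "finite Q" and q0_Q: "q0 \<in> Q" and F_Q: "F \<subseteq> Q"
    and \<delta>_Q: "\<forall>q x q'. \<delta> q x = Some q' \<longrightarrow> q \<in> Q \<and> q' \<in> Q"
    and cons_pos: "\<forall>u\<in>hatPos Sig Sp Sn ce. dfa_accepts \<delta> q0 F u"
    and cons_neg: "\<forall>u\<in>hatNeg Sig Sp Sn ce. \<not> dfa_accepts \<delta> q0 F u"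
    and from_pos: "\<forall>q x q'. \<delta> q x = Some q' \<longrightarrow>
                     (\<exists>u. u @ [x] \<in> pref (hatPos Sig Sp Sn ce) \<and> dfa_run \<delta> q0 u = Some q)"
  shows
    "(\<forall>q s c q'. s \<in> Sig \<and> c \<in> {0, 1} \<and> \<delta> q (Tl s c) = Some q' \<longrightarrow>
        (\<exists>a\<in>SAct. fst a = c \<and> \<delta> q (ActL a) \<noteq> None \<and> snd a s \<noteq> None))
   \<and> (\<forall>q s c q' a b. s \<in> Sig \<and> c \<in> {0, 1} \<and> \<delta> q (Tl s c) = Some q'
        \<and> a \<in> SAct \<and> fst a = c \<and> \<delta> q (ActL a) \<noteq> None \<and> snd a s \<noteq> None
        \<and> b \<in> SAct \<and> fst b = c \<and> \<delta> q (ActL b) \<noteq> None \<and> snd b s \<noteq> None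
        \<longrightarrow> snd a s = snd b s)
   \<and> (\<forall>q s q' e. s \<in> Sig \<and> droca_delta \<delta> SAct 0 q s = Some (q', e) \<longrightarrow> e \<in> {0, 1})
   \<and> (\<forall>q s q' e. s \<in> Sig \<and> droca_delta \<delta> SAct 1 q s = Some (q', e) \<longrightarrow> e \<in> {-1, 0, 1})
   \<and> (\<forall>w\<in>pref S. \<exists>q. droca_run (droca_delta \<delta> SAct) q0 w = Some (q, ce w))
   \<and> (\<forall>w\<in>Sp. droca_accepts (droca_delta \<delta> SAct) q0 F w)
   \<and> (\<forall>w\<in>Sn. \<not> droca_accepts (droca_delta \<delta> SAct) q0 F w)"
proof -
  interpret consistent_dfa Sig Sp Sn ce q0 \<delta> F
    by unfold_locales (insert ce_eps S_words ce_step cons_pos cons_neg from_pos, unfold S_def, blast)+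
  show ?thesis
    unfolding SAct_def S_def
    by (intro conjI allI ballI impI; (elim conjE)?)
      (blast intro: Tl_transition_enables_Act, blast intro: enabled_Act_updates_agree,
        (rule droca_delta_zero_update_range; assumption),
        (rule droca_delta_update_range; assumption),
        blast dest: run_simulation, erule droca_accepts_pos, erule droca_rejects_neg)
qed

end
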